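(* Let $Y_1,Y_2\subsetneq\mathbb{C}$ be conformally equivalent domains and $\Omega\subset\mathbb{C}$ an arbitrary domain. Then there exist $a\in Y_1$ and $b\in Y_2$ such that $\mathscr{C}_{\Omega}^{Y_1,a}(w)=\mathscr{C}_{\Omega}^{Y_2,b}(w)$ for every $w\in\Omega$.
   Context: $\mathbb{D}=\{z\in\mathbb{C}:|z|<1\}$. For domains $\Omega\subset\mathbb{C}$, $Y\subsetneq\mathbb{C}$, and points $w\in\Omega$, $s\in Y$, let $\mathcal{H}^s_w(\Omega,Y)$ be the set of holomorphic maps $h:\Omega\to Y$ with $h(w)=s$ and $h(z)\neq s$ for all $z\in\Omega\setminus\{w\}$. For a domain $Y\subsetneq\mathbb{C}$ and $v\in Y$, the Hurwitz density is $\eta_Y(v)=2/r_Y(v)$, where $r_Y(v)=\max\{h'(0): h:\mathbb{D}\to Y \text{ holomorphic},\ h(0)=v,\ h(z)\neq v \text{ for } z\in\mathbb{D}\setminus\{0\},\ h'(0)>0\}$. The Carathéodory density of the Hurwitz metric of $\Omega$ relative to $Y$ is $\mathscr{C}_{\Omega}^{Y,s}(w)=\sup\{\eta_Y(h(w))|h'(w)| : h\in\mathcal{H}^s_w(\Omega,Y)\}$, defined to be $0$ if $\mathcal{H}^s_w(\Omega,Y)=\emptyset$. *)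

theory Defs
  imports "HOL-Complex_Analysis.Complex_Analysis"
begin

definition is_domain :: "complex set \<Rightarrow> bool" where
  "is_domain S \<longleftrightarrow> open S \<and> connected S \<and> S \<noteq> {}"

definition hurwitz_maps :: "complex set \<Rightarrow> complex set \<Rightarrow> complex \<Rightarrow> complex \<Rightarrow> (complex \<Rightarrow> complex) set" where
  "hurwitz_maps \<Omega> Y w s =
     {h. h holomorphic_on \<Omega> \<and> h ` \<Omega> \<subseteq> Y \<and> h w = s \<and> (\<forall>z\<in>\<Omega> - {w}. h z \<noteq> s)}"

text \<open>r_Y(v): the extremal value of h'(0) over maps in H^v_0(D, Y) with h'(0) > 0
  (the paper shows the maximum is attained, so it equals the supremum).\<close>
definition hurwitz_radius :: "complex set \<Rightarrow> complex \<Rightarrow> real" where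
  "hurwitz_radius Y v =
     Sup {r. \<exists>h \<in> hurwitz_maps (ball 0 1) Y 0 v. deriv h 0 = complex_of_real r \<and> r > 0}"

definition hurwitz_density :: "complex set \<Rightarrow> complex \<Rightarrow> real" where
  "hurwitz_density Y v = 2 / hurwitz_radius Y v"

definition caratheodory_hurwitz :: "complex set \<Rightarrow> complex set \<Rightarrow> complex \<Rightarrow> complex \<Rightarrow> real" where
  "caratheodory_hurwitz \<Omega> Y s w =
     (if hurwitz_maps \<Omega> Y w s = {} then 0
      else Sup {hurwitz_density Y (h w) * cmod (deriv h w) | h. h \<in> hurwitz_maps \<Omega> Y w s})"

definition conformally_equivalent :: "complex set \<Rightarrow> complex set \<Rightarrow> bool" where
  "conformally_equivalent A B \<longleftrightarrow>
     (\<exists>f g. f holomorphic_on A \<and> g holomorphic_on B \<and> f ` A = B \<and> g ` B = A \<and>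
            (\<forall>z\<in>A. g (f z) = z) \<and> (\<forall>z\<in>B. f (g z) = z))"

end

theory Submission
  imports Defs
begin

text \<open>Postcomposition with a conformal map \<open>f : Y1 \<rightarrow> Y2\<close>, preceded by a rotation of the disc,
  carries the extremal problem for \<open>r_Y1(a)\<close> onto the one for \<open>r_Y2(f a)\<close>; hence
  \<open>r_Y2(f a) = |f'(a)| r_Y1(a)\<close>, i.e. \<open>\<eta>_Y2(f a) |f'(a)| = \<eta>_Y1(a)\<close>. Postcomposition with \<open>f\<close> also
  maps \<open>H^a_w(\<Omega>, Y1)\<close> onto \<open>H^(f a)_w(\<Omega>, Y2)\<close> and, by the chain rule, preserves
  \<open>\<eta>_Y(h w) |h'(w)|\<close>, so \<open>b = f a\<close> works for every \<open>a\<close>.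
  Scaling the supremum needs the radii to be bounded (the \<open>Sup\<close> of an unbounded set of reals is
  unspecified). They are, because \<open>Y\<close> omits a point \<open>p\<close>: \<open>\<phi> = (h - a)/(p - a)\<close> omits \<open>1\<close> and
  vanishes only at \<open>0\<close>, Schottky's theorem applied to a square root of \<open>1 - \<phi>\<close> bounds all such
  \<open>\<phi>\<close> uniformly near \<open>0\<close>, and Cauchy's inequality then bounds \<open>h'(0)\<close>.\<close>

lemma cSup_image_mult_left:
  fixes X :: "real set"
  assumes "c \<ge> 0" "X \<noteq> {}" "bdd_above X"
  shows "Sup ((*) c ` X) = c * Sup X"
proof -
  have "mono ((*) c)"
    using assms(1) by (intro monoI mult_left_mono)
  moreover have "continuous (at_left (Sup X)) ((*) c)"
    by (intro continuous_intros)
  ultimately show ?thesis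
    using continuous_at_Sup_mono assms(2,3) by metis
qed

lemma deriv_comp_holomorphic:
  assumes "f holomorphic_on A" "open A" "h holomorphic_on \<Omega>" "open \<Omega>" "w \<in> \<Omega>" "h w \<in> A"
  shows "deriv (f \<circ> h) w = deriv f (h w) * deriv h w"
  using assms by (intro deriv_chain holomorphic_on_imp_differentiable_at)

lemma uniform_bound_omitting_0_1:
  obtains K :: real where
    "\<And>\<phi> z. \<phi> holomorphic_on ball 0 1 \<Longrightarrow> (\<And>z. z \<in> ball 0 1 \<Longrightarrow> \<phi> z = 0 \<longleftrightarrow> z = 0)
      \<Longrightarrow> (\<And>z. z \<in> ball 0 1 \<Longrightarrow> \<phi> z \<noteq> 1) \<Longrightarrow> norm z \<le> 1/4 \<Longrightarrow> norm (\<phi> z) \<le> K"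
proof -
  define S where "S = exp (pi * exp (pi * (2 + 2 * 1 + 12 * (1/2) / (1 - 1/2::real))))"
  have "norm (\<phi> z) \<le> 1 + S\<^sup>2"
    if hol: "\<phi> holomorphic_on ball 0 1" and zero: "\<And>z. z \<in> ball 0 1 \<Longrightarrow> \<phi> z = 0 \<longleftrightarrow> z = 0"
      and one: "\<And>z. z \<in> ball 0 1 \<Longrightarrow> \<phi> z \<noteq> 1" and z: "norm z \<le> 1/4" for \<phi> z
  proof -
    have "(\<lambda>z. 1 - \<phi> z) holomorphic_on ball 0 1"
      by (intro holomorphic_intros hol)
    moreover have "1 - \<phi> u \<noteq> 0" if "u \<in> ball 0 1" for u
      using one[OF that] by simp
    ultimately obtain s where hol_s: "s holomorphic_on ball 0 1"
      and s: "\<And>z. z \<in> ball 0 1 \<Longrightarrow> 1 - \<phi> z = s z ^ 2"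
      using contractible_imp_holomorphic_sqrt[OF _ convex_imp_contractible[OF convex_ball]]
      by blast
    define \<sigma> where "\<sigma> = s 0"
    have \<sigma>: "\<sigma>\<^sup>2 = 1"
      using s[of 0] zero[of 0] by (simp add: \<sigma>_def)
    then have "norm \<sigma> ^ 2 = 1"
      by (metis norm_one norm_power)
    then have norm_\<sigma>: "norm \<sigma> = 1"
      using norm_ge_zero[of \<sigma>] by (auto simp: power2_eq_1_iff)
    define F where "F = (\<lambda>z. - \<sigma> * s (z/2))"
    have "F holomorphic_on cball 0 1"
      unfolding F_def
      by (intro holomorphic_intros holomorphic_on_compose_gen[OF _ hol_s, unfolded o_def]) auto
    moreover have "norm (F 0) \<le> 1"
      by (simp add: F_def \<sigma>_def norm_mult norm_\<sigma>[unfolded \<sigma>_def])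
    \<comment> \<open>\<open>s\<close> takes the values \<open>\<plusminus>1\<close> only at \<open>0\<close>, where it equals \<open>\<sigma>\<close>; hence \<open>F\<close> omits \<open>1\<close>.\<close>
    moreover have "\<not> (F u = 0 \<or> F u = 1)" if u: "u \<in> cball 0 1" for u
    proof
      have u2: "u/2 \<in> ball 0 1"
        using u by (auto simp: norm_divide)
      assume "F u = 0 \<or> F u = 1"
      then show False
      proof
        assume "F u = 0"
        then show False
          using s[OF u2] one[OF u2] \<sigma> by (auto simp: F_def)
      next
        assume "F u = 1"
        have "s (u/2) = (\<sigma> * \<sigma>) * s (u/2)"
          using \<sigma> by (simp add: power2_eq_square)
        also have "\<dots> = - \<sigma> * F u"
          by (simp add: F_def mult.assoc)
        finally have "s (u/2) = - \<sigma>"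
          using \<open>F u = 1\<close> by simp
        moreover from this have "u = 0"
          using s[OF u2] zero[OF u2] \<sigma> by simp
        ultimately show False
          using \<sigma> by (simp add: \<sigma>_def)
      qed
    qed
    ultimately have "norm (F u) \<le> S" if "norm u \<le> 1/2" for u
      unfolding S_def by (intro Schottky) (use that in auto)
    then have "norm (F (2 * z)) \<le> S"
      using z by (simp add: norm_mult)
    then have "norm (s z) \<le> S"
      by (simp add: F_def norm_mult norm_\<sigma>)
    then have bound_sq: "norm (s z ^ 2) \<le> S\<^sup>2"
      by (simp add: norm_power power_mono)
    have "\<phi> z = 1 - s z ^ 2"
      using s[of z] z by (simp add: algebra_simps)
    then have "norm (\<phi> z) \<le> 1 + norm (s z ^ 2)"
      using norm_triangle_ineq4[of 1 "s z ^ 2"] by simp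
    also have "\<dots> \<le> 1 + S\<^sup>2"
      using bound_sq by simp
    finally show ?thesis .
  qed
  then show thesis
    using that by blast
qed

lemma deriv_bound_omitting_0_1:
  obtains C :: real where
    "\<And>\<phi>. \<phi> holomorphic_on ball 0 1 \<Longrightarrow> (\<And>z. z \<in> ball 0 1 \<Longrightarrow> \<phi> z = 0 \<longleftrightarrow> z = 0)
      \<Longrightarrow> (\<And>z. z \<in> ball 0 1 \<Longrightarrow> \<phi> z \<noteq> 1) \<Longrightarrow> norm (deriv \<phi> 0) \<le> C"
proof -
  obtain K where K: "\<And>\<phi> z. \<phi> holomorphic_on ball 0 1 \<Longrightarrow> (\<And>z. z \<in> ball 0 1 \<Longrightarrow> \<phi> z = 0 \<longleftrightarrow> z = 0)
      \<Longrightarrow> (\<And>z. z \<in> ball 0 1 \<Longrightarrow> \<phi> z \<noteq> 1) \<Longrightarrow> norm z \<le> 1/4 \<Longrightarrow> norm (\<phi> z) \<le> K"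
    using uniform_bound_omitting_0_1 by blast
  have "norm (deriv \<phi> 0) \<le> 4 * K"
    if hol: "\<phi> holomorphic_on ball 0 1" and zero: "\<And>z. z \<in> ball 0 1 \<Longrightarrow> \<phi> z = 0 \<longleftrightarrow> z = 0"
      and one: "\<And>z. z \<in> ball 0 1 \<Longrightarrow> \<phi> z \<noteq> 1" for \<phi>
  proof -
    have small: "cball 0 (1/4) \<subseteq> ball (0::complex) 1"
      by auto
    have "norm ((deriv ^^ 1) \<phi> 0) \<le> fact 1 * K / (1/4) ^ 1"
    proof (rule Cauchy_inequality)
      show "\<phi> holomorphic_on ball 0 (1/4)"
        using hol by (rule holomorphic_on_subset) auto
      show "continuous_on (cball 0 (1/4)) \<phi>"
        using holomorphic_on_imp_continuous_on[OF holomorphic_on_subset[OF hol small]] .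
      show "norm (\<phi> x) \<le> K" if "norm (0 - x) = 1/4" for x
        using K[OF hol zero one] that by simp
    qed simp
    then show ?thesis
      by simp
  qed
  then show thesis
    using that by blast
qed

definition hurwitz_radii :: "complex set \<Rightarrow> complex \<Rightarrow> real set" where
  "hurwitz_radii Y v = {r. \<exists>h \<in> hurwitz_maps (ball 0 1) Y 0 v. deriv h 0 = complex_of_real r \<and> r > 0}"

lemma hurwitz_radius_eq_Sup: "hurwitz_radius Y v = Sup (hurwitz_radii Y v)"
  by (simp add: hurwitz_radius_def hurwitz_radii_def)

lemma hurwitz_radii_nonempty:
  assumes "open Y" "a \<in> Y"
  shows "hurwitz_radii Y a \<noteq> {}"
proof -
  obtain e where e: "e > 0" "ball a e \<subseteq> Y"
    using assms open_contains_ball by blast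
  define h where "h = (\<lambda>z. a + complex_of_real e * z)"
  have "h \<in> hurwitz_maps (ball 0 1) Y 0 a"
    using e by (auto simp: hurwitz_maps_def h_def dist_norm norm_mult intro!: holomorphic_intros)
  moreover have "deriv h 0 = complex_of_real e"
    unfolding h_def by (rule DERIV_imp_deriv) (auto intro!: derivative_eq_intros)
  ultimately show ?thesis
    using e unfolding hurwitz_radii_def by auto
qed

lemma bdd_above_hurwitz_radii:
  assumes "Y \<noteq> UNIV"
  shows "bdd_above (hurwitz_radii Y a)"
proof -
  obtain p where p: "p \<notin> Y"
    using assms by auto
  obtain C where C: "\<And>\<phi>. \<phi> holomorphic_on ball 0 1 \<Longrightarrow> (\<And>z. z \<in> ball 0 1 \<Longrightarrow> \<phi> z = 0 \<longleftrightarrow> z = 0)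
      \<Longrightarrow> (\<And>z. z \<in> ball 0 1 \<Longrightarrow> \<phi> z \<noteq> 1) \<Longrightarrow> norm (deriv \<phi> 0) \<le> C"
    using deriv_bound_omitting_0_1 by blast
  have "r \<le> C * norm (p - a)" if r_in: "r \<in> hurwitz_radii Y a" for r
  proof -
    obtain h where h: "h \<in> hurwitz_maps (ball 0 1) Y 0 a" and r: "deriv h 0 = complex_of_real r" "r > 0"
      using r_in unfolding hurwitz_radii_def by blast
    then have hol: "h holomorphic_on ball 0 1" and hY: "\<And>z. z \<in> ball 0 1 \<Longrightarrow> h z \<in> Y"
      and h0: "h 0 = a" and ha: "\<And>z. z \<in> ball 0 1 \<Longrightarrow> z \<noteq> 0 \<Longrightarrow> h z \<noteq> a"
      by (auto simp: hurwitz_maps_def)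
    have pa: "p \<noteq> a"
      using hY[of 0] h0 p by auto
    define \<phi> where "\<phi> = (\<lambda>z. (h z - a) / (p - a))"
    have "norm (deriv \<phi> 0) \<le> C"
    proof (rule C)
      show "\<phi> holomorphic_on ball 0 1"
        unfolding \<phi>_def using pa by (intro holomorphic_intros hol) auto
      show "\<phi> z = 0 \<longleftrightarrow> z = 0" if "z \<in> ball 0 1" for z
        using ha[OF that] h0 pa by (auto simp: \<phi>_def)
      show "\<phi> z \<noteq> 1" if "z \<in> ball 0 1" for z
        using hY[OF that] p pa by (auto simp: \<phi>_def)
    qed
    moreover have "(h has_field_derivative deriv h 0) (at 0)"
      using hol by (intro holomorphic_derivI[OF hol]) auto
    then have "(\<phi> has_field_derivative deriv h 0 / (p - a)) (at 0)"
      unfolding \<phi>_def using pa by (auto intro!: derivative_eq_intros)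
    then have "deriv \<phi> 0 = deriv h 0 / (p - a)"
      by (rule DERIV_imp_deriv)
    ultimately show ?thesis
      using r pa by (simp add: norm_divide field_simps)
  qed
  then show ?thesis
    by (rule bdd_aboveI)
qed

lemma hurwitz_maps_compose:
  assumes f: "f holomorphic_on A" "inj_on f A" "f ` A \<subseteq> B" "a \<in> A"
    and h: "h \<in> hurwitz_maps \<Omega> A w a"
  shows "f \<circ> h \<in> hurwitz_maps \<Omega> B w (f a)"
proof -
  have hol: "h holomorphic_on \<Omega>" and img: "h ` \<Omega> \<subseteq> A" and "h w = a"
    and ha: "\<And>z. z \<in> \<Omega> - {w} \<Longrightarrow> h z \<noteq> a"
    using h by (auto simp: hurwitz_maps_def)
  have "f \<circ> h holomorphic_on \<Omega>"
    using holomorphic_on_compose_gen[OF hol f(1) img] .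
  moreover have "f (h z) \<noteq> f a" if "z \<in> \<Omega> - {w}" for z
    using inj_on_eq_iff[OF f(2)] img f(4) ha[OF that] that by blast
  ultimately show ?thesis
    using img f(3) \<open>h w = a\<close> by (auto simp: hurwitz_maps_def)
qed

lemma hurwitz_maps_rotate:
  assumes u: "norm u = 1" and h: "h \<in> hurwitz_maps (ball 0 1) Y 0 a"
  shows "(\<lambda>z. h (u * z)) \<in> hurwitz_maps (ball 0 1) Y 0 a"
proof -
  have rot: "u * z \<in> ball 0 1 \<longleftrightarrow> z \<in> ball 0 1" for z
    using u by (simp add: norm_mult)
  have "h \<circ> (\<lambda>z. u * z) holomorphic_on ball 0 1"
    using h rot by (intro holomorphic_on_compose_gen[of _ _ h "ball 0 1"] holomorphic_intros)
      (auto simp: hurwitz_maps_def)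
  moreover have "u \<noteq> 0"
    using u by auto
  ultimately show ?thesis
    using h rot by (auto simp: hurwitz_maps_def o_def)
qed

lemma hurwitz_radii_scale:
  assumes "open A" "f holomorphic_on A" "inj_on f A" "f ` A \<subseteq> B" "a \<in> A"
  shows "(*) (norm (deriv f a)) ` hurwitz_radii A a \<subseteq> hurwitz_radii B (f a)"
proof
  fix x
  assume "x \<in> (*) (norm (deriv f a)) ` hurwitz_radii A a"
  then obtain r h where x: "x = norm (deriv f a) * r" and h: "h \<in> hurwitz_maps (ball 0 1) A 0 a"
    and r: "deriv h 0 = complex_of_real r" "r > 0"
    unfolding hurwitz_radii_def by auto
  define d where "d = deriv f a"
  have "d \<noteq> 0"
    unfolding d_def using assms by (intro holomorphic_injective_imp_regular)
  \<comment> \<open>Rotating the disc by \<open>|d|/d\<close> makes the derivative at \<open>0\<close> of the composite positive.\<close>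
  define u where "u = complex_of_real (norm d) / d"
  have "norm u = 1"
    using \<open>d \<noteq> 0\<close> by (simp add: u_def norm_divide)
  define k where "k = (\<lambda>z. h (u * z))"
  have k: "k \<in> hurwitz_maps (ball 0 1) A 0 a"
    unfolding k_def using \<open>norm u = 1\<close> h by (rule hurwitz_maps_rotate)
  then have "f \<circ> k \<in> hurwitz_maps (ball 0 1) B 0 (f a)"
    using assms by (intro hurwitz_maps_compose)
  moreover have "deriv (f \<circ> k) 0 = complex_of_real x"
  proof -
    have hol_h: "h holomorphic_on ball 0 1" and "k 0 = a" and hol_k: "k holomorphic_on ball 0 1"
      using h k by (auto simp: hurwitz_maps_def k_def)
    have "deriv k 0 = u * deriv h 0"
      unfolding k_def using deriv_compose_linear[of h u 0]
        holomorphic_on_imp_differentiable_at[OF hol_h] by simp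
    moreover have "deriv (f \<circ> k) 0 = d * deriv k 0"
      unfolding d_def using deriv_comp_holomorphic[OF assms(2,1) hol_k] \<open>k 0 = a\<close> assms(5) by simp
    ultimately show ?thesis
      using \<open>d \<noteq> 0\<close> by (simp add: x r u_def d_def)
  qed
  ultimately show "x \<in> hurwitz_radii B (f a)"
    using x r \<open>d \<noteq> 0\<close> unfolding hurwitz_radii_def d_def by auto
qed

definition caratheodory_values :: "complex set \<Rightarrow> complex set \<Rightarrow> complex \<Rightarrow> complex \<Rightarrow> real set" where
  "caratheodory_values \<Omega> Y s w =
     {hurwitz_density Y (h w) * norm (deriv h w) | h. h \<in> hurwitz_maps \<Omega> Y w s}"

lemma caratheodory_hurwitz_eq:
  "caratheodory_hurwitz \<Omega> Y s w =
     (if caratheodory_values \<Omega> Y s w = {} then 0 else Sup (caratheodory_values \<Omega> Y s w))"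
  by (auto simp: caratheodory_hurwitz_def caratheodory_values_def)

locale biholomorphism =
  fixes f g :: "complex \<Rightarrow> complex" and A B :: "complex set"
  assumes open_domain: "open A" and open_image: "open B"
    and holomorphic: "f holomorphic_on A" and holomorphic_inverse: "g holomorphic_on B"
    and maps_into: "f ` A \<subseteq> B" and inverse_maps_into: "g ` B \<subseteq> A"
    and inverse_apply: "\<And>z. z \<in> A \<Longrightarrow> g (f z) = z"
    and apply_inverse: "\<And>z. z \<in> B \<Longrightarrow> f (g z) = z"
begin

lemma biholomorphism_inverse: "biholomorphism g f B A"
  by unfold_locales
    (use open_domain open_image holomorphic holomorphic_inverse maps_into inverse_maps_into
      inverse_apply apply_inverse in auto)

lemma inj: "inj_on f A"
  using inverse_apply by (rule inj_on_inverseI)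

lemma inj_inverse: "inj_on g B"
  using apply_inverse by (rule inj_on_inverseI)

lemma deriv_inverse_mult:
  assumes "a \<in> A"
  shows "deriv g (f a) * deriv f a = 1"
proof -
  have "deriv (g \<circ> f) a = deriv g (f a) * deriv f a"
    using assms maps_into
    by (intro deriv_comp_holomorphic[OF holomorphic_inverse open_image holomorphic open_domain]) auto
  moreover have "deriv (g \<circ> f) a = deriv (\<lambda>z. z) a"
    using eventually_nhds_in_open[OF open_domain assms]
    by (intro deriv_cong_ev) (auto elim!: eventually_mono simp: inverse_apply)
  ultimately show ?thesis
    by simp
qed

lemma hurwitz_radii_image:
  assumes "a \<in> A"
  shows "hurwitz_radii B (f a) = (*) (norm (deriv f a)) ` hurwitz_radii A a"
proof
  show "(*) (norm (deriv f a)) ` hurwitz_radii A a \<subseteq> hurwitz_radii B (f a)"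
    using assms by (intro hurwitz_radii_scale open_domain holomorphic inj maps_into)
  show "hurwitz_radii B (f a) \<subseteq> (*) (norm (deriv f a)) ` hurwitz_radii A a"
  proof
    fix x
    assume "x \<in> hurwitz_radii B (f a)"
    then have "norm (deriv g (f a)) * x \<in> hurwitz_radii A a"
      using hurwitz_radii_scale[OF open_image holomorphic_inverse inj_inverse inverse_maps_into, of "f a"]
        assms maps_into inverse_apply by auto
    moreover have "x = norm (deriv f a) * (norm (deriv g (f a)) * x)"
      using deriv_inverse_mult[OF assms] by (metis mult.assoc mult.commute mult_1 norm_mult norm_one)
    ultimately show "x \<in> (*) (norm (deriv f a)) ` hurwitz_radii A a"
      by blast
  qed
qed

lemma hurwitz_density_image:
  assumes "a \<in> A" "A \<noteq> UNIV"
  shows "hurwitz_density B (f a) * norm (deriv f a) = hurwitz_density A a"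
proof -
  have "hurwitz_radius B (f a) = norm (deriv f a) * hurwitz_radius A a"
    unfolding hurwitz_radius_eq_Sup hurwitz_radii_image[OF assms(1)]
    using hurwitz_radii_nonempty[OF open_domain assms(1)] bdd_above_hurwitz_radii[OF assms(2)]
    by (intro cSup_image_mult_left) auto
  moreover have "deriv f a \<noteq> 0"
    using deriv_inverse_mult[OF assms(1)] by auto
  ultimately show ?thesis
    by (simp add: hurwitz_density_def)
qed

lemma caratheodory_values_subset:
  assumes "a \<in> A" "A \<noteq> UNIV" "open \<Omega>" "w \<in> \<Omega>"
  shows "caratheodory_values \<Omega> A a w \<subseteq> caratheodory_values \<Omega> B (f a) w"
proof
  fix x
  assume "x \<in> caratheodory_values \<Omega> A a w"
  then obtain h where h: "h \<in> hurwitz_maps \<Omega> A w a"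
    and x: "x = hurwitz_density A a * norm (deriv h w)"
    by (auto simp: caratheodory_values_def hurwitz_maps_def)
  have "f \<circ> h \<in> hurwitz_maps \<Omega> B w (f a)"
    using holomorphic inj maps_into assms(1) h by (rule hurwitz_maps_compose)
  moreover have "deriv (f \<circ> h) w = deriv f a * deriv h w"
    using h assms by (auto simp: hurwitz_maps_def
        intro!: deriv_comp_holomorphic[OF holomorphic open_domain, of h \<Omega> w, simplified])
  moreover have "(f \<circ> h) w = f a"
    using h by (simp add: hurwitz_maps_def)
  ultimately have "x = hurwitz_density B ((f \<circ> h) w) * norm (deriv (f \<circ> h) w)"
    using x hurwitz_density_image[OF assms(1,2), symmetric] by (simp add: norm_mult)
  then show "x \<in> caratheodory_values \<Omega> B (f a) w"
    unfolding caratheodory_values_def using \<open>f \<circ> h \<in> hurwitz_maps \<Omega> B w (f a)\<close> by blast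
qed

lemma caratheodory_hurwitz_image:
  assumes "a \<in> A" "A \<noteq> UNIV" "B \<noteq> UNIV" "open \<Omega>" "w \<in> \<Omega>"
  shows "caratheodory_hurwitz \<Omega> B (f a) w = caratheodory_hurwitz \<Omega> A a w"
proof -
  have "f a \<in> B"
    using assms(1) maps_into by auto
  then have "caratheodory_values \<Omega> B (f a) w \<subseteq> caratheodory_values \<Omega> A a w"
    using biholomorphism.caratheodory_values_subset[OF biholomorphism_inverse, of "f a"]
      assms inverse_apply by auto
  then have "caratheodory_values \<Omega> B (f a) w = caratheodory_values \<Omega> A a w"
    using caratheodory_values_subset[OF assms(1,2,4,5)] by (rule antisym)
  then show ?thesis
    by (simp add: caratheodory_hurwitz_eq)
qed

end

theorem corollary3p15:
  fixes Y1 Y2 \<Omega> :: "complex set"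
  assumes "is_domain Y1" and "Y1 \<noteq> UNIV"
      and "is_domain Y2" and "Y2 \<noteq> UNIV"
      and "conformally_equivalent Y1 Y2"
      and "is_domain \<Omega>"
  shows "\<exists>a\<in>Y1. \<exists>b\<in>Y2. \<forall>w\<in>\<Omega>.
           caratheodory_hurwitz \<Omega> Y1 a w = caratheodory_hurwitz \<Omega> Y2 b w"
proof -
  obtain f g where "f holomorphic_on Y1" "g holomorphic_on Y2" "f ` Y1 = Y2" "g ` Y2 = Y1"
    "\<forall>z\<in>Y1. g (f z) = z" "\<forall>z\<in>Y2. f (g z) = z"
    using assms(5) unfolding conformally_equivalent_def by blast
  then interpret biholomorphism f g Y1 Y2
    using assms(1,3) by unfold_locales (auto simp: is_domain_def)
  obtain a where a: "a \<in> Y1"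
    using assms(1) by (auto simp: is_domain_def)
  have "open \<Omega>"
    using assms(6) by (simp add: is_domain_def)
  then show ?thesis
    using a maps_into assms(2,4) caratheodory_hurwitz_image[symmetric] by blast
qed

end
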